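(* Let $X$ be a real Banach space and $M\subseteq X$ a topologically linearly independent set such that $M\cup\{0_X\}$ is a free basis of $X$. Let $N=\{m/\|m\| : m\in M\}$. Then there is an isomorphism of Banach spaces (bounded linear bijection with bounded inverse) $\phi\colon X\to\ell^1(N)$ with $\phi(n)=e_n$ for every $n\in N$, where $e_n$ is the indicator of $\{n\}$. In particular, $M$ is a (long) Schauder basis of $X$.
   Context: A subset $A\subseteq X\setminus\{0\}$ of a topological vector space $X$ is topologically linearly independent if for every neighborhood $W$ of $0$ there is a neighborhood $U$ of $0$ such that for every finite $F\subseteq A$ and reals $\{r_a: a\in F\}$, $\sum_{a\in F}r_a a\in U$ implies $r_a a\in W$ for all $a\in F$. A free basis of a Banach space $X$ is a closed subset $N_0\subseteq X$ containing $0_X$ such that for every Banach space $Y$ and every Lipschitz map $f\colon N_0\to Y$ with $f(0_X)=0_Y$ there is a unique bounded linear map $\hat f\colon X\to Y$ extending $f$. For a set $N$, $\ell^1(N)$ is the Banach space of all $x=(x_n)_{n\in N}$ with $\|x\|=\sum_{n\in N}|x_n|<\infty$ (so only countably many $x_n$ are nonzero). *)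

theory Defs
  imports "HOL-Analysis.Analysis" "HOL-Probability.Discrete_Topology"
begin

text \<open>Topological linear independence of a subset A of X (neighbourhoods of 0 are
  taken to be open sets containing 0; this is equivalent to general neighbourhoods).\<close>
definition top_lin_indep :: "'a::real_normed_vector set \<Rightarrow> bool" where
  "top_lin_indep A \<longleftrightarrow> A \<subseteq> UNIV - {0} \<and>
     (\<forall>W. open W \<and> 0 \<in> W \<longrightarrow>
        (\<exists>U. open U \<and> 0 \<in> U \<and>
           (\<forall>F r. finite F \<and> F \<subseteq> A \<and> (\<Sum>a\<in>F. r a *\<^sub>R a) \<in> U \<longrightarrow>
                  (\<forall>a\<in>F. r a *\<^sub>R a \<in> W))))"

definition free_basis_wrt :: "'b::banach itself \<Rightarrow> 'a::banach set \<Rightarrow> bool" where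
  "free_basis_wrt _ N0 \<longleftrightarrow> closed N0 \<and> 0 \<in> N0 \<and>
     (\<forall>f :: 'a \<Rightarrow> 'b. (\<exists>C. C-lipschitz_on N0 f) \<and> f 0 = 0 \<longrightarrow>
        (\<exists>!T :: 'a \<Rightarrow> 'b. bounded_linear T \<and> (\<forall>x\<in>N0. T x = f x)))"

text \<open>ell^1(N), represented as real functions on the ambient type vanishing outside N
  with absolutely summable values on N; norm = sum of absolute values.\<close>
definition ell1 :: "'a set \<Rightarrow> ('a \<Rightarrow> real) set" where
  "ell1 N = {x. (\<forall>n. n \<notin> N \<longrightarrow> x n = 0) \<and> (\<lambda>n. \<bar>x n\<bar>) summable_on N}"

definition ell1_norm :: "'a set \<Rightarrow> ('a \<Rightarrow> real) \<Rightarrow> real" where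
  "ell1_norm N x = (\<Sum>\<^sub>\<infinity>n\<in>N. \<bar>x n\<bar>)"

instance bcontfun :: (metric_space, banach) banach ..

text \<open>Universal target: ell^infinity over the carrier of X (bounded functions on a discrete copy).\<close>
type_synonym 'a linf = "'a discrete \<Rightarrow>\<^sub>C real"

end

theory Submission
  imports Defs
begin

(* Topological linear independence makes M \<union> {0} uniformly separated:
   ||a|| + ||b|| <= C ||a - b|| for distinct a, b.  Hence every map on M \<union> {0} that vanishes
   at 0 and is dominated by the norm is Lipschitz, and the free basis property extends it to a
   bounded operator.  For the scalar maps m \<mapsto> ||m|| [m/||m|| = n] this yields coordinate
   functionals c_n biorthogonal to N.  For the ell-infinity(X)-valued map
   m \<mapsto> (z \<mapsto> ||m|| sgn (c_(m/||m||) z)), evaluated at z = sum of sgn (c_n x) n over a finite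
   G \<subseteq> N, it yields sum of |c_n x| over G <= K ||x||, so x \<mapsto> (c_n x)_n maps X boundedly
   into ell1(N).  Finally x \<mapsto> sum of c_n(x) n over N is a bounded operator that is the
   identity on M, hence on X by uniqueness of extensions. *)

lemma top_lin_indep_nonzero: "top_lin_indep M \<Longrightarrow> 0 \<notin> M"
  by (auto simp: top_lin_indep_def)

lemma top_lin_indep_small_sum:
  fixes M :: "'a::real_normed_vector set"
  assumes "top_lin_indep M"
  obtains e where "e > 0"
    "\<And>F r a. finite F \<Longrightarrow> F \<subseteq> M \<Longrightarrow> norm (\<Sum>a\<in>F. r a *\<^sub>R a) < e \<Longrightarrow> a \<in> F \<Longrightarrow>
      norm (r a *\<^sub>R a) < 1"
proof -
  have "\<exists>U. open U \<and> 0 \<in> U \<and> (\<forall>F r. finite F \<and> F \<subseteq> M \<and> (\<Sum>a\<in>F. r a *\<^sub>R a) \<in> U \<longrightarrow>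
      (\<forall>a\<in>F. r a *\<^sub>R a \<in> ball 0 1))"
    using conjunct2[OF assms[unfolded top_lin_indep_def], rule_format, of "ball 0 1"] by simp
  then obtain U where "open U" "0 \<in> U" and U: "\<forall>F r. finite F \<and> F \<subseteq> M \<and>
      (\<Sum>a\<in>F. r a *\<^sub>R a) \<in> U \<longrightarrow> (\<forall>a\<in>F. r a *\<^sub>R a \<in> ball 0 1)"
    by (elim exE conjE)
  obtain e where "e > 0" "ball 0 e \<subseteq> U"
    using \<open>open U\<close> \<open>0 \<in> U\<close> open_contains_ball by blast
  show ?thesis
  proof (rule that[OF \<open>e > 0\<close>])
    fix F r a assume "finite F" "F \<subseteq> M" "norm (\<Sum>a\<in>F. r a *\<^sub>R a) < e" "a \<in> F"
    with \<open>ball 0 e \<subseteq> U\<close> U show "norm (r a *\<^sub>R a) < 1"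
      by auto
  qed
qed

lemma top_lin_indep_separated:
  assumes "top_lin_indep M"
  obtains C where "C \<ge> 0"
    "\<And>a b. a \<in> M \<union> {0} \<Longrightarrow> b \<in> M \<union> {0} \<Longrightarrow> a \<noteq> b \<Longrightarrow> norm a + norm b \<le> C * dist a b"
proof -
  obtain e where "e > 0" and e: "\<And>F r a. finite F \<Longrightarrow> F \<subseteq> M \<Longrightarrow>
      norm (\<Sum>a\<in>F. r a *\<^sub>R a) < e \<Longrightarrow> a \<in> F \<Longrightarrow> norm (r a *\<^sub>R a) < 1"
    using top_lin_indep_small_sum[OF assms] by blast
  have one_sided: "e * norm a \<le> 2 * dist a b" if "a \<in> M" "b \<in> M \<union> {0}" "a \<noteq> b" for a b
  proof -
    define s where "s = e / (2 * dist a b)"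
    define r where "r x = (if x = a then s else - s)" for x
    have "s > 0"
      using \<open>e > 0\<close> \<open>a \<noteq> b\<close> by (simp add: s_def)
    \<comment> \<open>Since \<open>0 \<notin> M\<close>, the set \<open>{a, b} \<inter> M\<close> is \<open>{a}\<close> if \<open>b = 0\<close>; either way the sum is \<open>s (a - b)\<close>.\<close>
    have "(\<Sum>x\<in>{a, b} \<inter> M. r x *\<^sub>R x) = s *\<^sub>R (a - b)"
      using that top_lin_indep_nonzero[OF assms] by (auto simp: r_def algebra_simps)
    moreover have "norm (s *\<^sub>R (a - b)) < e"
      using \<open>e > 0\<close> \<open>a \<noteq> b\<close> by (simp add: s_def dist_norm)
    ultimately have "norm (r a *\<^sub>R a) < 1"
      using e[of "{a, b} \<inter> M" r a] \<open>a \<in> M\<close> by auto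
    then have "s * norm a < 1"
      using \<open>s > 0\<close> by (simp add: r_def)
    then show ?thesis
      using \<open>a \<noteq> b\<close> by (simp add: s_def field_simps)
  qed
  have bound: "norm a \<le> 2 / e * dist a b" if "a \<in> M \<union> {0}" "b \<in> M \<union> {0}" "a \<noteq> b" for a b
    using one_sided[OF _ that(2,3)] that(1) \<open>e > 0\<close> by (cases "a = 0") (auto simp: field_simps)
  show ?thesis
  proof (rule that[of "4 / e"])
    fix a b assume "a \<in> M \<union> {0}" "b \<in> M \<union> {0}" "a \<noteq> b"
    then show "norm a + norm b \<le> 4 / e * dist a b"
      using bound[of a b] bound[of b a] by (simp add: dist_commute)
  qed (use \<open>e > 0\<close> in simp)
qed

lemma lipschitz_on_norm_dominated:
  fixes f :: "'a::real_normed_vector \<Rightarrow> 'b::real_normed_vector"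
  assumes "C \<ge> 0"
    and separated: "\<And>a b. a \<in> S \<Longrightarrow> b \<in> S \<Longrightarrow> a \<noteq> b \<Longrightarrow> norm a + norm b \<le> C * dist a b"
    and dominated: "\<And>a. a \<in> S \<Longrightarrow> norm (f a) \<le> norm a"
  shows "C-lipschitz_on S f"
proof (rule lipschitz_onI)
  fix a b assume "a \<in> S" "b \<in> S"
  show "dist (f a) (f b) \<le> C * dist a b"
  proof (cases "a = b")
    case False
    have "dist (f a) (f b) \<le> norm (f a) + norm (f b)"
      by (simp add: dist_norm norm_triangle_ineq4)
    also have "\<dots> \<le> norm a + norm b"
      using dominated[OF \<open>a \<in> S\<close>] dominated[OF \<open>b \<in> S\<close>] by (rule add_mono)
    also have "\<dots> \<le> C * dist a b"
      using separated \<open>a \<in> S\<close> \<open>b \<in> S\<close> False .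
    finally show ?thesis .
  qed simp
qed fact

lemma free_basis_wrt_extension:
  fixes f :: "'a::banach \<Rightarrow> 'b::banach"
  assumes "free_basis_wrt TYPE('b) S" "C-lipschitz_on S f" "f 0 = 0"
  obtains T where "bounded_linear T" "\<And>x. x \<in> S \<Longrightarrow> T x = f x"
  using assms unfolding free_basis_wrt_def by blast

lemma free_basis_wrt_unique:
  fixes T T' :: "'a::banach \<Rightarrow> 'b::banach"
  assumes S: "free_basis_wrt TYPE('b) S" and "bounded_linear T" "bounded_linear T'"
    and eq: "\<And>x. x \<in> S \<Longrightarrow> x \<noteq> 0 \<Longrightarrow> T x = T' x"
  shows "T = T'"
proof -
  obtain C where "C-lipschitz_on S T"
    using bounded_linear.lipschitz_boundE[OF \<open>bounded_linear T\<close>] .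
  moreover have "T 0 = 0"
    using \<open>bounded_linear T\<close> by (simp add: linear_simps)
  ultimately have "\<exists>!T''. bounded_linear T'' \<and> (\<forall>x\<in>S. T'' x = T x)"
    using S unfolding free_basis_wrt_def by blast
  moreover have "\<forall>x\<in>S. T' x = T x"
    using eq \<open>bounded_linear T\<close> \<open>bounded_linear T'\<close> by (metis linear_simps(3))
  ultimately show ?thesis
    using \<open>bounded_linear T\<close> \<open>bounded_linear T'\<close> by blast
qed

lemma free_basis_wrt_extend_norm_dominated:
  fixes f :: "'a::banach \<Rightarrow> 'b::banach"
  assumes "top_lin_indep M" "free_basis_wrt TYPE('b) (M \<union> {0})"
    and "\<And>m. m \<in> M \<Longrightarrow> norm (f m) \<le> norm m" "f 0 = 0"
  obtains T where "bounded_linear T" "\<And>m. m \<in> M \<Longrightarrow> T m = f m"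
proof -
  obtain C where "C \<ge> 0" and
    "\<And>a b. a \<in> M \<union> {0} \<Longrightarrow> b \<in> M \<union> {0} \<Longrightarrow> a \<noteq> b \<Longrightarrow> norm a + norm b \<le> C * dist a b"
    using top_lin_indep_separated[OF assms(1)] by blast
  then have "C-lipschitz_on (M \<union> {0}) f"
    by (rule lipschitz_on_norm_dominated) (use assms(3,4) in auto)
  then obtain T where "bounded_linear T" and T: "\<And>x. x \<in> M \<union> {0} \<Longrightarrow> T x = f x"
    using free_basis_wrt_extension[where f = f, OF assms(2) _ assms(4)] by blast
  show ?thesis
    by (rule that[OF \<open>bounded_linear T\<close>]) (simp add: T)
qed

lemma apply_Bcontfun_discrete:
  fixes h :: "'a \<Rightarrow> real"
  assumes "\<And>z. \<bar>h z\<bar> \<le> B"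
  shows "apply_bcontfun (Bcontfun (\<lambda>p. h (of_discrete p))) = (\<lambda>p. h (of_discrete p))"
proof (rule Bcontfun_inverse, rule bcontfun_normI)
  show "continuous_on UNIV (\<lambda>p. h (of_discrete p))"
    unfolding continuous_on_open_invariant by (auto simp: open_discrete)
qed (use assms in auto)

lemma bounded_linear_apply_bcontfun:
  "bounded_linear (\<lambda>f::('a::topological_space, 'b::real_normed_vector) bcontfun. apply_bcontfun f x)"
  by (rule bounded_linear_intro[where K = 1]) (auto intro: norm_bounded)

lemma summable_on_scaleR_unit:
  fixes N :: "'a::banach set"
  assumes "\<And>n. n \<in> N \<Longrightarrow> norm n = 1" "(\<lambda>n. \<bar>a n\<bar>) summable_on N"
  shows "(\<lambda>n. norm (a n *\<^sub>R n)) summable_on N"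
proof -
  have "(\<lambda>n. norm (a n *\<^sub>R n)) summable_on N \<longleftrightarrow> (\<lambda>n. \<bar>a n\<bar>) summable_on N"
    by (rule summable_on_cong) (simp add: assms(1))
  with assms(2) show ?thesis
    by simp
qed

lemma norm_infsum_scaleR_unit_le:
  fixes N :: "'a::banach set"
  assumes "\<And>n. n \<in> N \<Longrightarrow> norm n = 1" "(\<lambda>n. \<bar>a n\<bar>) summable_on N"
  shows "norm (\<Sum>\<^sub>\<infinity>n\<in>N. a n *\<^sub>R n) \<le> (\<Sum>\<^sub>\<infinity>n\<in>N. \<bar>a n\<bar>)"
proof -
  have "norm (\<Sum>\<^sub>\<infinity>n\<in>N. a n *\<^sub>R n) \<le> (\<Sum>\<^sub>\<infinity>n\<in>N. norm (a n *\<^sub>R n))"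
    using summable_on_scaleR_unit[OF assms] by (rule norm_infsum_bound)
  also have "\<dots> = (\<Sum>\<^sub>\<infinity>n\<in>N. \<bar>a n\<bar>)"
    by (rule infsum_cong) (simp add: assms(1))
  finally show ?thesis .
qed

locale top_lin_indep_real_free_basis =
  fixes M :: "'a::banach set"
  assumes top_lin_indep: "top_lin_indep M"
    and free_basis_real: "free_basis_wrt TYPE(real) (M \<union> {0})"
begin

lemma zero_notin_M: "0 \<notin> M"
  using top_lin_indep by (rule top_lin_indep_nonzero)

definition coord :: "'a \<Rightarrow> 'a \<Rightarrow> real" where
  "coord n = (THE c. bounded_linear c \<and> (\<forall>m\<in>M. c m = (if sgn m = n then norm m else 0)))"

lemma coord_unique: "\<exists>!c. bounded_linear c \<and> (\<forall>m\<in>M. c m = (if sgn m = n then norm m else 0))"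
proof (rule ex_ex1I)
  obtain c where "bounded_linear c" and c: "\<And>m. m \<in> M \<Longrightarrow> c m = (if m \<in> M \<and> sgn m = n then norm m else 0)"
    by (rule free_basis_wrt_extend_norm_dominated[OF top_lin_indep free_basis_real,
          where f = "\<lambda>x. if x \<in> M \<and> sgn x = n then norm x else 0"]) (use zero_notin_M in auto)
  then show "\<exists>c. bounded_linear c \<and> (\<forall>m\<in>M. c m = (if sgn m = n then norm m else 0))"
    by auto
next
  fix c c' :: "'a \<Rightarrow> real"
  assume "bounded_linear c \<and> (\<forall>m\<in>M. c m = (if sgn m = n then norm m else 0))"
    and "bounded_linear c' \<and> (\<forall>m\<in>M. c' m = (if sgn m = n then norm m else 0))"
  then show "c = c'"
    by (intro free_basis_wrt_unique[OF free_basis_real]) auto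
qed

lemma bounded_linear_coord: "bounded_linear (coord n)"
  and coord_basis: "m \<in> M \<Longrightarrow> coord n m = (if sgn m = n then norm m else 0)"
  using theI'[OF coord_unique[of n]] unfolding coord_def[symmetric] by auto

lemmas coord_add = linear_add[OF bounded_linear.linear[OF bounded_linear_coord]]
  and coord_scaleR = linear_scale[OF bounded_linear.linear[OF bounded_linear_coord]]

lemma coord_sgn:
  assumes "m \<in> M"
  shows "coord n (sgn m) = (if sgn m = n then 1 else 0)"
proof -
  have "m \<noteq> 0"
    using assms zero_notin_M by auto
  with assms show ?thesis
    by (simp add: sgn_div_norm coord_scaleR coord_basis)
qed

lemma has_sum_coord:
  assumes "((\<lambda>n. a n *\<^sub>R n) has_sum x) G" "G \<subseteq> sgn ` M"
  shows "coord n x = (if n \<in> G then a n else 0)"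
proof -
  have "((\<lambda>n'. coord n (a n' *\<^sub>R n')) has_sum coord n x) G"
    using bounded_linear_coord assms(1) by (rule has_sum_bounded_linear)
  moreover have "((\<lambda>n'. coord n (a n' *\<^sub>R n')) has_sum (if n \<in> G then a n else 0)) G"
    by (rule has_sum_finite_neutralI[where B = "G \<inter> {n}"])
      (use assms(2) in \<open>auto simp: coord_scaleR coord_sgn\<close>)
  ultimately show ?thesis
    using has_sum_unique by blast
qed

definition coeffs :: "'a \<Rightarrow> 'a \<Rightarrow> real" where
  "coeffs x n = (if n \<in> sgn ` M then coord n x else 0)"

lemma coeffs_add: "coeffs (x + y) = (\<lambda>n. coeffs x n + coeffs y n)"
  by (auto simp: coeffs_def coord_add)

lemma coeffs_scaleR: "coeffs (c *\<^sub>R x) = (\<lambda>n. c * coeffs x n)"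
  by (auto simp: coeffs_def coord_scaleR)

lemma coeffs_basis: "n \<in> sgn ` M \<Longrightarrow> coeffs n = indicator {n}"
  by (auto simp: fun_eq_iff coeffs_def coord_sgn indicator_def)

lemma sign_operator:
  assumes "free_basis_wrt TYPE('a linf) (M \<union> {0})"
  obtains T :: "'a \<Rightarrow> 'a linf" where "bounded_linear T"
    "\<And>m z. m \<in> M \<Longrightarrow> T m (discrete z) = sgn (coord (sgn m) z) * norm m"
proof -
  define F :: "'a \<Rightarrow> 'a linf" where
    "F x = Bcontfun (\<lambda>p. sgn (coord (sgn x) (of_discrete p)) * norm x)" for x
  have F: "F x p = sgn (coord (sgn x) (of_discrete p)) * norm x" for x p
    unfolding F_def by (subst apply_Bcontfun_discrete[where B = "norm x"]) (auto simp: abs_mult abs_sgn_eq)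
  have "norm (F x) \<le> norm x" for x
    by (rule norm_bound) (auto simp: F abs_mult abs_sgn_eq)
  moreover have "F 0 = 0"
    by (rule bcontfun_eqI) (simp add: F)
  ultimately obtain T where "bounded_linear T" and T: "\<And>m. m \<in> M \<Longrightarrow> T m = F m"
    using free_basis_wrt_extend_norm_dominated[OF top_lin_indep assms, where f = F] by blast
  show ?thesis
    by (rule that[OF \<open>bounded_linear T\<close>]) (simp add: T F discrete_inverse)
qed

lemma sign_operator_sign_vector:
  fixes T :: "'a \<Rightarrow> 'a linf"
  assumes "bounded_linear T"
    and T: "\<And>m z. m \<in> M \<Longrightarrow> T m (discrete z) = sgn (coord (sgn m) z) * norm m"
    and G: "finite G" "G \<subseteq> sgn ` M" and s: "\<And>n. n \<in> G \<Longrightarrow> sgn (s n) = s n"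
  shows "T y (discrete (\<Sum>n\<in>G. s n *\<^sub>R n)) = (\<Sum>n\<in>G. s n * coord n y)"
proof -
  define z where "z = (\<Sum>n\<in>G. s n *\<^sub>R n)"
  have coord_z: "coord n z = (if n \<in> G then s n else 0)" for n
    using has_sum_coord[OF has_sum_finite[OF G(1)] G(2)] unfolding z_def .
  have "(\<lambda>y. T y (discrete z)) = (\<lambda>y. \<Sum>n\<in>G. s n * coord n y)"
  proof (rule free_basis_wrt_unique[OF free_basis_real])
    show "bounded_linear (\<lambda>y. T y (discrete z))"
      using bounded_linear_apply_bcontfun \<open>bounded_linear T\<close> by (rule bounded_linear_compose)
    show "bounded_linear (\<lambda>y. \<Sum>n\<in>G. s n * coord n y)"
      by (intro bounded_linear_sum bounded_linear_const_mult bounded_linear_coord)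
    fix m assume "m \<in> M \<union> {0}" "m \<noteq> 0"
    then show "T m (discrete z) = (\<Sum>n\<in>G. s n * coord n m)"
      using G(1) s by (simp add: T coord_z coord_basis if_distrib cong: if_cong)
  qed
  then show ?thesis
    by (simp add: z_def fun_eq_iff)
qed

lemma sum_abs_coord_bounded:
  assumes "free_basis_wrt TYPE('a linf) (M \<union> {0})"
  obtains K where "\<And>G x. finite G \<Longrightarrow> G \<subseteq> sgn ` M \<Longrightarrow> (\<Sum>n\<in>G. \<bar>coord n x\<bar>) \<le> K * norm x"
proof -
  obtain T :: "'a \<Rightarrow> 'a linf" where "bounded_linear T"
    and T: "\<And>m z. m \<in> M \<Longrightarrow> T m (discrete z) = sgn (coord (sgn m) z) * norm m"
    using sign_operator[OF assms] by blast
  obtain K where K: "\<And>x. norm (T x) \<le> norm x * K"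
    using bounded_linear.bounded[OF \<open>bounded_linear T\<close>] by blast
  have "(\<Sum>n\<in>G. \<bar>coord n x\<bar>) \<le> K * norm x" if G: "finite G" "G \<subseteq> sgn ` M" for G x
  proof -
    have "sgn t * t = \<bar>t\<bar>" for t :: real
      by (simp add: sgn_if)
    then have "(\<Sum>n\<in>G. \<bar>coord n x\<bar>) = T x (discrete (\<Sum>n\<in>G. sgn (coord n x) *\<^sub>R n))"
      using sign_operator_sign_vector[OF \<open>bounded_linear T\<close> T G, of "\<lambda>n. sgn (coord n x)"] by simp
    also have "\<dots> \<le> norm (T x)"
      using norm_bounded[of "T x"] by (simp add: abs_le_iff)
    also have "\<dots> \<le> K * norm x"
      using K by (simp add: mult.commute)
    finally show ?thesis .
  qed
  then show ?thesis
    by (rule that)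
qed

end

locale top_lin_indep_free_basis = top_lin_indep_real_free_basis +
  assumes free_basis_self: "free_basis_wrt TYPE('a) (M \<union> {0})"
    and free_basis_linf: "free_basis_wrt TYPE('a linf) (M \<union> {0})"
begin

lemma norm_basis: "n \<in> sgn ` M \<Longrightarrow> norm n = 1"
  using zero_notin_M by (auto simp: norm_sgn)

lemma summable_abs_coord: "(\<lambda>n. \<bar>coord n x\<bar>) summable_on sgn ` M"
proof -
  obtain K where K: "\<And>G x. finite G \<Longrightarrow> G \<subseteq> sgn ` M \<Longrightarrow> (\<Sum>n\<in>G. \<bar>coord n x\<bar>) \<le> K * norm x"
    using sum_abs_coord_bounded[OF free_basis_linf] by metis
  show ?thesis
  proof (rule nonneg_bdd_above_summable_on)
    show "bdd_above (sum (\<lambda>n. \<bar>coord n x\<bar>) ` {G. G \<subseteq> sgn ` M \<and> finite G})"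
      by (rule bdd_aboveI[of _ "K * norm x"]) (auto intro: K)
  qed simp
qed

lemma infsum_abs_coord_bounded:
  obtains K where "\<And>x. (\<Sum>\<^sub>\<infinity>n\<in>sgn ` M. \<bar>coord n x\<bar>) \<le> K * norm x"
proof -
  obtain K where K: "\<And>G x. finite G \<Longrightarrow> G \<subseteq> sgn ` M \<Longrightarrow> (\<Sum>n\<in>G. \<bar>coord n x\<bar>) \<le> K * norm x"
    using sum_abs_coord_bounded[OF free_basis_linf] by metis
  have "(\<Sum>\<^sub>\<infinity>n\<in>sgn ` M. \<bar>coord n x\<bar>) \<le> K * norm x" for x
    using summable_abs_coord by (rule infsum_le_finite_sums) (rule K)
  then show ?thesis
    by (rule that)
qed

lemma summable_coord_expansion: "(\<lambda>n. coord n x *\<^sub>R n) summable_on sgn ` M"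
  using summable_on_scaleR_unit[OF norm_basis summable_abs_coord] by (rule abs_summable_summable)

lemma coord_expansion: "(\<Sum>\<^sub>\<infinity>n\<in>sgn ` M. coord n x *\<^sub>R n) = x"
proof -
  define P where "P x = (\<Sum>\<^sub>\<infinity>n\<in>sgn ` M. coord n x *\<^sub>R n)" for x
  obtain K where K: "\<And>x. (\<Sum>\<^sub>\<infinity>n\<in>sgn ` M. \<bar>coord n x\<bar>) \<le> K * norm x"
    using infsum_abs_coord_bounded by metis
  have "bounded_linear P"
  proof (rule bounded_linear_intro[where K = K])
    show "P (x + y) = P x + P y" for x y
      unfolding P_def coord_add scaleR_add_left
      using summable_coord_expansion summable_coord_expansion by (rule infsum_add)
    show "P (r *\<^sub>R x) = r *\<^sub>R P x" for r x
      unfolding P_def coord_scaleR by (simp add: infsum_scaleR_right flip: scaleR_scaleR)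
    show "norm (P x) \<le> norm x * K" for x
      using norm_infsum_scaleR_unit_le[OF norm_basis summable_abs_coord, of x] K[of x]
      by (simp add: P_def mult.commute)
  qed
  moreover have "P m = m" if "m \<in> M" for m
  proof -
    have "P m = (\<Sum>\<^sub>\<infinity>n\<in>{sgn m}. coord n m *\<^sub>R n)"
      unfolding P_def by (rule infsum_cong_neutral) (use that in \<open>auto simp: coord_basis\<close>)
    also have "\<dots> = m"
      using that zero_notin_M by (cases "m = 0") (simp_all add: coord_basis sgn_div_norm)
    finally show ?thesis .
  qed
  ultimately have "P = (\<lambda>x. x)"
    by (intro free_basis_wrt_unique[OF free_basis_self _ bounded_linear_ident]) auto
  then show ?thesis
    by (simp add: P_def fun_eq_iff)
qed

lemma coeffs_expansion: "(\<Sum>\<^sub>\<infinity>n\<in>sgn ` M. coeffs x n *\<^sub>R n) = x"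
proof -
  have "(\<Sum>\<^sub>\<infinity>n\<in>sgn ` M. coeffs x n *\<^sub>R n) = (\<Sum>\<^sub>\<infinity>n\<in>sgn ` M. coord n x *\<^sub>R n)"
    by (rule infsum_cong) (simp add: coeffs_def)
  also have "\<dots> = x"
    by (rule coord_expansion)
  finally show ?thesis .
qed

lemma ell1_norm_coeffs: "ell1_norm (sgn ` M) (coeffs x) = (\<Sum>\<^sub>\<infinity>n\<in>sgn ` M. \<bar>coord n x\<bar>)"
  unfolding ell1_norm_def by (rule infsum_cong) (simp add: coeffs_def)

lemma coeffs_in_ell1: "coeffs x \<in> ell1 (sgn ` M)"
proof -
  have "(\<lambda>n. \<bar>coeffs x n\<bar>) summable_on sgn ` M \<longleftrightarrow> (\<lambda>n. \<bar>coord n x\<bar>) summable_on sgn ` M"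
    by (rule summable_on_cong) (simp add: coeffs_def)
  moreover have "\<forall>n. n \<notin> sgn ` M \<longrightarrow> coeffs x n = 0"
    by (simp add: coeffs_def)
  ultimately show ?thesis
    using summable_abs_coord unfolding ell1_def by blast
qed

lemma norm_le_ell1_norm_coeffs: "norm x \<le> ell1_norm (sgn ` M) (coeffs x)"
proof -
  have "norm x = norm (\<Sum>\<^sub>\<infinity>n\<in>sgn ` M. coord n x *\<^sub>R n)"
    by (simp add: coord_expansion)
  also have "\<dots> \<le> ell1_norm (sgn ` M) (coeffs x)"
    unfolding ell1_norm_coeffs by (rule norm_infsum_scaleR_unit_le[OF norm_basis summable_abs_coord])
  finally show ?thesis .
qed

lemma coeffs_surj: "a \<in> ell1 (sgn ` M) \<Longrightarrow> a \<in> range coeffs"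
proof -
  assume "a \<in> ell1 (sgn ` M)"
  then have a0: "\<And>n. n \<notin> sgn ` M \<Longrightarrow> a n = 0" and "(\<lambda>n. \<bar>a n\<bar>) summable_on sgn ` M"
    by (auto simp: ell1_def)
  have "(\<lambda>n. a n *\<^sub>R n) summable_on sgn ` M"
    using summable_on_scaleR_unit[OF norm_basis \<open>(\<lambda>n. \<bar>a n\<bar>) summable_on sgn ` M\<close>]
    by (rule abs_summable_summable)
  then have "((\<lambda>n. a n *\<^sub>R n) has_sum (\<Sum>\<^sub>\<infinity>n\<in>sgn ` M. a n *\<^sub>R n)) (sgn ` M)"
    by (rule has_sum_infsum)
  from has_sum_coord[OF this subset_refl]
  have "coeffs (\<Sum>\<^sub>\<infinity>n\<in>sgn ` M. a n *\<^sub>R n) = a"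
    using a0 by (auto simp: fun_eq_iff coeffs_def)
  then show ?thesis
    by (rule range_eqI[OF sym])
qed

lemma bij_coeffs: "bij_betw coeffs UNIV (ell1 (sgn ` M))"
proof (rule bij_betw_imageI)
  show "inj_on coeffs UNIV"
  proof (rule inj_onI)
    fix x y assume "coeffs x = coeffs y"
    have "x = (\<Sum>\<^sub>\<infinity>n\<in>sgn ` M. coeffs x n *\<^sub>R n)"
      by (rule coeffs_expansion[symmetric])
    also have "\<dots> = (\<Sum>\<^sub>\<infinity>n\<in>sgn ` M. coeffs y n *\<^sub>R n)"
      by (simp only: \<open>coeffs x = coeffs y\<close>)
    also have "\<dots> = y"
      by (rule coeffs_expansion)
    finally show "x = y" .
  qed
  show "range coeffs = ell1 (sgn ` M)"
    using coeffs_in_ell1 coeffs_surj by (intro equalityI image_subsetI subsetI)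
qed

end

theorem theorem4p9:
  fixes M :: "'a::banach set"
  assumes tli: "top_lin_indep M"
    and fb_real: "free_basis_wrt TYPE(real) (M \<union> {0})"
    and fb_self: "free_basis_wrt TYPE('a) (M \<union> {0})"
    and fb_linf: "free_basis_wrt TYPE('a linf) (M \<union> {0})"
  defines "N \<equiv> (\<lambda>m. (1 / norm m) *\<^sub>R m) ` M"
  shows "\<exists>\<phi> :: 'a \<Rightarrow> ('a \<Rightarrow> real).
           bij_betw \<phi> UNIV (ell1 N)
         \<and> (\<forall>x y. \<phi> (x + y) = (\<lambda>n. \<phi> x n + \<phi> y n))
         \<and> (\<forall>c x. \<phi> (c *\<^sub>R x) = (\<lambda>n. c * \<phi> x n))
         \<and> (\<exists>C. \<forall>x. ell1_norm N (\<phi> x) \<le> C * norm x)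
         \<and> (\<exists>C. \<forall>x. norm x \<le> C * ell1_norm N (\<phi> x))
         \<and> (\<forall>n\<in>N. \<phi> n = indicator {n})"
proof -
  interpret top_lin_indep_free_basis M
    using tli fb_real fb_self fb_linf by unfold_locales
  have N: "N = sgn ` M"
    unfolding N_def by (simp add: sgn_div_norm divide_inverse_commute)
  obtain K where K: "\<And>x. (\<Sum>\<^sub>\<infinity>n\<in>sgn ` M. \<bar>coord n x\<bar>) \<le> K * norm x"
    using infsum_abs_coord_bounded by metis
  show ?thesis
    unfolding N
  proof (intro exI[of _ coeffs] conjI)
    show "bij_betw coeffs UNIV (ell1 (sgn ` M))"
      by (rule bij_coeffs)
    show "\<forall>x y. coeffs (x + y) = (\<lambda>n. coeffs x n + coeffs y n)"
      by (simp add: coeffs_add)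
    show "\<forall>c x. coeffs (c *\<^sub>R x) = (\<lambda>n. c * coeffs x n)"
      by (simp add: coeffs_scaleR)
    show "\<exists>C. \<forall>x. ell1_norm (sgn ` M) (coeffs x) \<le> C * norm x"
      using K by (auto simp: ell1_norm_coeffs)
    show "\<exists>C. \<forall>x. norm x \<le> C * ell1_norm (sgn ` M) (coeffs x)"
      using norm_le_ell1_norm_coeffs by (intro exI[of _ 1]) simp
    show "\<forall>n\<in>sgn ` M. coeffs n = indicator {n}"
      by (simp add: coeffs_basis)
  qed
qed

end
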